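(* Let $U\in\mathbb{R}^{n\times d}$, let $\mathbf{x}_*\in\mathbb{R}^d$ be $s$-sparse and $\mathbf{y}=U\mathbf{x}_*$ (noiseless). Let $\mathbf{x}_t$ be an iterate of Algorithm 1 with support $\mathcal{S}_t$, and $\mathcal{S}_*$ the support of $\mathbf{x}_*$. If $|\mathcal{S}_t\setminus\mathcal{S}_*|\le s$, $\|\mathbf{x}_t-\mathbf{x}_*\|_2\le\Delta_t$ and $\lambda_t=\frac{\delta_s+\sqrt2\theta_{s,s}}{\sqrt s}\Delta_t$, then \[ \|\mathbf{x}_{t+1}-\mathbf{x}_*\|_2\le(\delta_s+\sqrt2\theta_{s,s}+\delta_{3s})\Delta_t . \]
   Context: $U_{\mathcal T}$ is the column submatrix of $U$ indexed by $\mathcal T$. $\delta_k$ is the smallest constant $\ge0$ with $(1-\delta_k)\|\mathbf{v}\|_2^2\le\|U_{\mathcal T}\mathbf{v}\|_2^2\le(1+\delta_k)\|\mathbf{v}\|_2^2$ for all $|\mathcal T|\le k$, $\mathbf{v}\in\mathbb{R}^{|\mathcal T|}$; $\theta_{s,s}$ (with $2s\le d$) is the smallest constant with $|\langle U_{\mathcal T}\mathbf{v},U_{\mathcal T'}\mathbf{v}'\rangle|\le\theta_{s,s}\|\mathbf{v}\|_2\|\mathbf{v}'\|_2$ for all disjoint $\mathcal T,\mathcal T'$ of size at most $s$. Algorithm 1: $\mathbf{x}_1=0$ and $\mathbf{x}_{t+1}=\mathrm{sign}(\widehat{\mathbf{x}}_t)[|\widehat{\mathbf{x}}_t|-\lambda_t]_+$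 with $\widehat{\mathbf{x}}_t=\mathbf{x}_t-U^\top(U\mathbf{x}_t-\mathbf{y})$ (componentwise), for parameters $\lambda_t>0$. *)

theory Defs
  imports "HOL-Analysis.Analysis"
begin

definition supp :: "real^'d \<Rightarrow> 'd set" where
  "supp x = {i. x $ i \<noteq> 0}"

text \<open>Restricted isometry constant delta_k of U. A vector U_T v with |T| \<le> k,
  v in R^|T|, is exactly U z for a vector z supported in T (z extends v by zeros).\<close>
definition rip_const :: "real^'d^'n \<Rightarrow> nat \<Rightarrow> real" where
  "rip_const U k = Inf {\<delta>. 0 \<le> \<delta> \<and>
     (\<forall>z :: real^'d. card (supp z) \<le> k \<longrightarrow>
        (1 - \<delta>) * (norm z)^2 \<le> (norm (U *v z))^2 \<and>
        (norm (U *v z))^2 \<le> (1 + \<delta>) * (norm z)^2)}"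

definition rop_const :: "real^'d^'n \<Rightarrow> nat \<Rightarrow> real" where
  "rop_const U s = Inf {\<theta>. 0 \<le> \<theta> \<and>
     (\<forall>z z' :: real^'d. card (supp z) \<le> s \<longrightarrow> card (supp z') \<le> s \<longrightarrow>
        supp z \<inter> supp z' = {} \<longrightarrow>
        \<bar>(U *v z) \<bullet> (U *v z')\<bar> \<le> \<theta> * norm z * norm z')}"

definition soft_thr :: "real \<Rightarrow> real^'d \<Rightarrow> real^'d" where
  "soft_thr lm x = (\<chi> i. sgn (x $ i) * max (\<bar>x $ i\<bar> - lm) 0)"

text \<open>Algorithm 1. Index shift: alg U y lam 0 is x_1 = 0, and alg U y lam t is
  x_{t+1}; the threshold used to produce alg (Suc t) from alg t is lam t.\<close>
fun alg :: "real^'d^'n \<Rightarrow> real^'n \<Rightarrow> (nat \<Rightarrow> real) \<Rightarrow> nat \<Rightarrow> real^'d" where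
  "alg U y lam 0 = 0"
| "alg U y lam (Suc t) =
     soft_thr (lam t) (alg U y lam t - transpose U *v (U *v alg U y lam t - y))"

end

theory Submission
  imports Defs
begin

text \<open>
  Write \<open>e = x\<^sub>t - x\<^sub>*\<close> and \<open>G = U\<^sup>T U e\<close>. Since \<open>y = U x\<^sub>*\<close>, the gradient step
  produces \<open>x\<^sub>* + (e - G)\<close>, and soft thresholding at level \<open>\<lambda>\<close> moves every coordinate by at most
  \<open>\<lambda>\<close> and kills every coordinate of modulus at most \<open>\<lambda>\<close>. Outside \<open>S = supp x\<^sub>* \<union> supp x\<^sub>t\<close> the
  perturbation is \<open>-G\<close>, and at most \<open>s\<close> coordinates there satisfy \<open>|G\<^sub>i| > \<lambda>\<close>: restricting \<open>G\<close>
  to \<open>s\<close> of them gives \<open>v\<close> with \<open>\<parallel>v\<parallel>\<^sup>2 = \<langle>Uv, Ue\<rangle> \<le> \<surd>2 \<theta>\<^sub>s\<^sub>,\<^sub>s \<parallel>v\<parallel> \<parallel>e\<parallel>\<close>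
  (split \<open>e\<close> into two disjoint \<open>s\<close>-sparse parts), which contradicts \<open>\<parallel>v\<parallel> > \<surd>s \<lambda>\<close>.
  Adding these coordinates to \<open>S\<close> gives a set \<open>T\<close> of size at most \<open>3s\<close>, on which
  \<open>e - G\<close> has norm at most \<open>\<delta>\<^sub>3\<^sub>s \<parallel>e\<parallel>\<close> by polarization of the restricted isometry property;
  the thresholding itself costs at most \<open>\<lambda>\<close> on each of the \<open>s\<close> coordinates of \<open>supp x\<^sub>*\<close>.
\<close>

lemma card_le_if_subset:
  fixes A :: "'a::finite set"
  assumes "A \<subseteq> B" "card B \<le> k"
  shows "card A \<le> k"
  using card_mono[OF finite assms(1)] assms(2) by simp

lemma supp_add_subset: "supp (a + b) \<subseteq> supp a \<union> supp b"
  and supp_diff_subset: "supp (a - b) \<subseteq> supp a \<union> supp b"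
  by (auto simp: supp_def)

lemma supp_scaleR: "c \<noteq> 0 \<Longrightarrow> supp (c *\<^sub>R a) = supp a"
  by (auto simp: supp_def)

definition vec_restrict :: "'d set \<Rightarrow> real^'d \<Rightarrow> real^'d" where
  "vec_restrict A x = (\<chi> i. if i \<in> A then x $ i else 0)"

lemma vec_restrict_nth [simp]: "vec_restrict A x $ i = (if i \<in> A then x $ i else 0)"
  by (simp add: vec_restrict_def)

lemma supp_vec_restrict: "supp (vec_restrict A x) \<subseteq> A \<inter> supp x"
  by (auto simp: supp_def)

lemma norm_vec_sq: "(norm x)\<^sup>2 = (\<Sum>i\<in>UNIV. (x $ i)\<^sup>2)"
  for x :: "real^'d"
  by (simp add: norm_vec_def L2_set_def sum_nonneg)

lemma norm_vec_restrict_sq: "(norm (vec_restrict A x))\<^sup>2 = (\<Sum>i\<in>A. (x $ i)\<^sup>2)"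
  by (simp add: norm_vec_sq if_distrib[of "\<lambda>t. t\<^sup>2"] sum.If_cases)

lemma inner_vec_restrict_self: "vec_restrict A x \<bullet> x = (norm (vec_restrict A x))\<^sup>2"
  unfolding norm_vec_restrict_sq inner_vec_def
  by (simp add: if_distrib[of "\<lambda>t. t * _"] sum.If_cases power2_eq_square)

lemma norm_vec_restrict_Compl_sq:
  "(norm (vec_restrict A x))\<^sup>2 + (norm (vec_restrict (- A) x))\<^sup>2 = (norm x)\<^sup>2"
  by (simp add: norm_vec_restrict_sq norm_vec_sq sum.union_disjoint[symmetric] Compl_eq_Diff_UNIV
      sum.subset_diff[of A UNIV])

lemma inner_matrix_vector_transpose:
  fixes U :: "real^'d^'n"
  shows "(U *v v) \<bullet> w = v \<bullet> (transpose U *v w)"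
  using adjoint_works[OF matrix_vector_mul_linear, of v U w] by (simp add: adjoint_matrix)

lemma norm_matrix_vector_le:
  fixes U :: "real^'d^'n"
  shows "norm (U *v z) \<le> onorm ((*v) U) * norm z"
  by (rule onorm[OF matrix_vector_mul_bounded_linear])

lemma add_le_sqrt2_mult_sqrt_sum_squares: "a + b \<le> sqrt 2 * sqrt (a\<^sup>2 + b\<^sup>2)"
  for a b :: real
proof -
  have "a + b \<le> sqrt ((a + b)\<^sup>2)" by simp
  also have "\<dots> \<le> sqrt (2 * (a\<^sup>2 + b\<^sup>2))"
    using zero_le_power2[of "a - b"] by (intro real_sqrt_le_mono) (simp add: power2_eq_square algebra_simps)
  finally show ?thesis by (simp only: real_sqrt_mult)
qed

lemma sq_le_mult_imp_le:
  fixes x c :: real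
  assumes "x\<^sup>2 \<le> c * x" "0 \<le> x" "0 \<le> c"
  shows "x \<le> c"
  using assms by (cases "x = 0") (auto simp: power2_eq_square)

definition optimal_const :: "'a set \<Rightarrow> ('a \<Rightarrow> real) \<Rightarrow> ('a \<Rightarrow> real) \<Rightarrow> real" where
  "optimal_const I f g = Inf {c. 0 \<le> c \<and> (\<forall>i\<in>I. f i \<le> c * g i)}"

lemma optimal_const_nonneg:
  assumes "0 \<le> C" "\<And>i. i \<in> I \<Longrightarrow> f i \<le> C * g i"
  shows "0 \<le> optimal_const I f g"
  unfolding optimal_const_def using assms by (intro cInf_greatest) auto

lemma optimal_const_bound:
  assumes "0 \<le> C" "\<And>i. i \<in> I \<Longrightarrow> f i \<le> C * g i"
    and "\<And>i. i \<in> I \<Longrightarrow> 0 \<le> g i" and "i \<in> I"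
  shows "f i \<le> optimal_const I f g * g i"
proof (cases "g i = 0")
  case True
  then show ?thesis using assms(2)[OF assms(4)] by simp
next
  case False
  with assms(3,4) have "0 < g i" by (simp add: less_le)
  have "f i / g i \<le> optimal_const I f g"
    unfolding optimal_const_def
  proof (rule cInf_greatest)
    show "{c. 0 \<le> c \<and> (\<forall>i\<in>I. f i \<le> c * g i)} \<noteq> {}" using assms(1,2) by blast
  next
    fix c assume "c \<in> {c. 0 \<le> c \<and> (\<forall>i\<in>I. f i \<le> c * g i)}"
    then show "f i / g i \<le> c" using \<open>0 < g i\<close> assms(4) by (simp add: divide_le_eq)
  qed
  then show ?thesis using \<open>0 < g i\<close> by (simp add: divide_le_eq)
qed

lemma rip_const_eq_optimal_const:
  "rip_const U k = optimal_const {z. card (supp z) \<le> k}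
     (\<lambda>z. \<bar>(norm (U *v z))\<^sup>2 - (norm z)\<^sup>2\<bar>) (\<lambda>z. (norm z)\<^sup>2)"
  unfolding rip_const_def optimal_const_def by (rule arg_cong[where f = Inf]) (auto simp: algebra_simps)

lemma rop_const_eq_optimal_const:
  "rop_const U s = optimal_const {(z, z'). card (supp z) \<le> s \<and> card (supp z') \<le> s \<and> supp z \<inter> supp z' = {}}
     (\<lambda>(z, z'). \<bar>(U *v z) \<bullet> (U *v z')\<bar>) (\<lambda>(z, z'). norm z * norm z')"
  unfolding rop_const_def optimal_const_def by (rule arg_cong[where f = Inf]) (auto simp: mult.assoc)

text \<open>Any bound on the operator norm of \<open>U\<close> shows that the sets whose infima define
  \<open>rip_const\<close> and \<open>rop_const\<close> are nonempty.\<close>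

lemma rip_const_a_priori:
  fixes U :: "real^'d^'n"
  shows "\<bar>(norm (U *v z))\<^sup>2 - (norm z)\<^sup>2\<bar> \<le> ((onorm ((*v) U))\<^sup>2 + 1) * (norm z)\<^sup>2"
proof -
  have "(norm (U *v z))\<^sup>2 \<le> (onorm ((*v) U) * norm z)\<^sup>2"
    by (rule power_mono[OF norm_matrix_vector_le]) simp
  then have "(norm (U *v z))\<^sup>2 \<le> (onorm ((*v) U))\<^sup>2 * (norm z)\<^sup>2"
    by (simp add: power_mult_distrib)
  moreover have "0 \<le> (norm z)\<^sup>2" "0 \<le> (norm (U *v z))\<^sup>2" by simp_all
  ultimately show ?thesis unfolding abs_le_iff distrib_right by linarith
qed

lemma rop_const_a_priori:
  fixes U :: "real^'d^'n"
  shows "\<bar>(U *v z) \<bullet> (U *v z')\<bar> \<le> (onorm ((*v) U))\<^sup>2 * (norm z * norm z')"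
proof -
  have "\<bar>(U *v z) \<bullet> (U *v z')\<bar> \<le> norm (U *v z) * norm (U *v z')"
    by (rule Cauchy_Schwarz_ineq2)
  also have "\<dots> \<le> (onorm ((*v) U) * norm z) * (onorm ((*v) U) * norm z')"
    by (intro mult_mono norm_matrix_vector_le)
      (simp_all add: onorm_pos_le[OF matrix_vector_mul_bounded_linear])
  finally show ?thesis by (simp add: power2_eq_square mult_ac)
qed

lemma rip_const_nonneg: "0 \<le> rip_const U k"
  unfolding rip_const_eq_optimal_const by (rule optimal_const_nonneg[OF _ rip_const_a_priori]) simp

lemma rip_const_bound:
  assumes "card (supp z) \<le> k"
  shows "\<bar>(norm (U *v z))\<^sup>2 - (norm z)\<^sup>2\<bar> \<le> rip_const U k * (norm z)\<^sup>2"
  unfolding rip_const_eq_optimal_const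
  by (rule optimal_const_bound[OF _ rip_const_a_priori]) (use assms in auto)

lemma rop_const_nonneg: "0 \<le> rop_const U s"
  unfolding rop_const_eq_optimal_const
  by (rule optimal_const_nonneg[of "(onorm ((*v) U))\<^sup>2"]) (auto simp: rop_const_a_priori)

lemma rop_const_bound:
  assumes "card (supp z) \<le> s" "card (supp z') \<le> s" "supp z \<inter> supp z' = {}"
  shows "\<bar>(U *v z) \<bullet> (U *v z')\<bar> \<le> rop_const U s * norm z * norm z'"
proof -
  have "(\<lambda>(z, z'). \<bar>(U *v z) \<bullet> (U *v z')\<bar>) (z, z') \<le> rop_const U s * (\<lambda>(z, z'). norm z * norm z') (z, z')"
    unfolding rop_const_eq_optimal_const
    by (rule optimal_const_bound[of "(onorm ((*v) U))\<^sup>2"]) (use assms in \<open>auto simp: rop_const_a_priori\<close>)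
  then show ?thesis by (simp add: mult.assoc)
qed

lemma inner_deviation_le_rip_const_sum_squares:
  fixes U :: "real^'d^'n"
  assumes "card (supp a \<union> supp b) \<le> k"
  shows "\<bar>a \<bullet> b - (U *v a) \<bullet> (U *v b)\<bar> \<le> rip_const U k * ((norm a)\<^sup>2 + (norm b)\<^sup>2) / 2"
proof -
  define dev where "dev z = (norm z)\<^sup>2 - (norm (U *v z))\<^sup>2" for z
  have "dev (a + b) - dev (a - b) = 4 * (a \<bullet> b - (U *v a) \<bullet> (U *v b))"
    by (simp add: dev_def 
        power2_norm_eq_inner inner_commute algebra_simps)
  then have "4 * \<bar>a \<bullet> b - (U *v a) \<bullet> (U *v b)\<bar> = \<bar>dev (a + b) - dev (a - b)\<bar>"
    by (simp only: abs_mult)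
  also have "\<dots> \<le> \<bar>dev (a + b)\<bar> + \<bar>dev (a - b)\<bar>"
    by (rule abs_triangle_ineq4)
  also have "\<dots> \<le> rip_const U k * (norm (a + b))\<^sup>2 + rip_const U k * (norm (a - b))\<^sup>2"
    using rip_const_bound[of "a + b" k U] rip_const_bound[of "a - b" k U]
      card_le_if_subset[OF supp_add_subset assms] card_le_if_subset[OF supp_diff_subset assms]
    unfolding dev_def by (simp add: abs_minus_commute)
  also have "\<dots> = 2 * rip_const U k * ((norm a)\<^sup>2 + (norm b)\<^sup>2)"
    by (simp add: power2_norm_eq_inner inner_commute algebra_simps)
  finally show ?thesis by simp
qed

lemma inner_deviation_le_rip_const:
  fixes U :: "real^'d^'n"
  assumes "card (supp p \<union> supp q) \<le> k"
  shows "\<bar>p \<bullet> q - (U *v p) \<bullet> (U *v q)\<bar> \<le> rip_const U k * norm p * norm q"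
proof (cases "p = 0 \<or> q = 0")
  case True
  then show ?thesis by auto
next
  case False
  then have pos: "0 < norm p" "0 < norm q" by auto
  define a where "a = (1 / norm p) *\<^sub>R p"
  define b where "b = (1 / norm q) *\<^sub>R q"
  have "card (supp a \<union> supp b) \<le> k"
    using assms pos by (simp add: a_def b_def supp_scaleR)
  then have "\<bar>a \<bullet> b - (U *v a) \<bullet> (U *v b)\<bar> \<le> rip_const U k"
    using inner_deviation_le_rip_const_sum_squares[of a b k U] pos by (simp add: a_def b_def)
  moreover have "a \<bullet> b - (U *v a) \<bullet> (U *v b) = (p \<bullet> q - (U *v p) \<bullet> (U *v q)) / (norm p * norm q)"
    by (simp add: a_def b_def matrix_vector_mult_scaleR diff_divide_distrib mult.commute)
  ultimately show ?thesis
    using pos by (simp add: abs_div_pos divide_le_eq mult.assoc)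
qed

lemma inner_le_rop_const_split:
  fixes U :: "real^'d^'n"
  assumes "card (supp v) \<le> s" "card P \<le> s" "card Q \<le> s"
    and "supp e \<subseteq> P \<union> Q" "supp v \<inter> (P \<union> Q) = {}"
  shows "\<bar>(U *v v) \<bullet> (U *v e)\<bar> \<le> sqrt 2 * rop_const U s * norm v * norm e"
proof -
  define e1 where "e1 = vec_restrict P e"
  define e2 where "e2 = vec_restrict (- P) e"
  have "e = e1 + e2" by (simp add: e1_def e2_def vec_eq_iff)
  have supp_e1: "supp e1 \<subseteq> P" and supp_e2: "supp e2 \<subseteq> Q"
    using assms(4) supp_vec_restrict[of P e] supp_vec_restrict[of "- P" e]
    by (auto simp: e1_def e2_def)
  have "\<bar>(U *v v) \<bullet> (U *v e)\<bar> \<le> \<bar>(U *v v) \<bullet> (U *v e1)\<bar> + \<bar>(U *v v) \<bullet> (U *v e2)\<bar>"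
    by (simp add: \<open>e = e1 + e2\<close> matrix_vector_right_distrib inner_add_right abs_triangle_ineq)
  also have "\<dots> \<le> rop_const U s * norm v * norm e1 + rop_const U s * norm v * norm e2"
    using card_le_if_subset[OF supp_e1 assms(2)] card_le_if_subset[OF supp_e2 assms(3)]
      supp_e1 supp_e2 assms(1,5)
    by (intro add_mono rop_const_bound) auto
  also have "\<dots> = rop_const U s * norm v * (norm e1 + norm e2)"
    by (simp add: algebra_simps)
  also have "\<dots> \<le> rop_const U s * norm v * (sqrt 2 * norm e)"
  proof (rule mult_left_mono)
    have "(norm e1)\<^sup>2 + (norm e2)\<^sup>2 = (norm e)\<^sup>2"
      unfolding e1_def e2_def by (rule norm_vec_restrict_Compl_sq)
    then show "norm e1 + norm e2 \<le> sqrt 2 * norm e"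
      using add_le_sqrt2_mult_sqrt_sum_squares[of "norm e1" "norm e2"] by simp
  qed (simp add: rop_const_nonneg)
  finally show ?thesis by (simp add: mult_ac)
qed

lemma card_large_gram_entries_le:
  fixes U :: "real^'d^'n"
  assumes "0 < s" "card P \<le> s" "card Q \<le> s" "supp e \<subseteq> P \<union> Q" "R \<inter> (P \<union> Q) = {}"
    and large: "\<And>i. i \<in> R \<Longrightarrow> l < \<bar>(transpose U *v (U *v e)) $ i\<bar>"
    and small: "sqrt 2 * rop_const U s * norm e \<le> l * sqrt s"
  shows "card R \<le> s"
proof (rule ccontr)
  assume "\<not> card R \<le> s"
  then obtain R' where "R' \<subseteq> R" "card R' = s"
    by (meson less_imp_le_nat not_le obtain_subset_with_card_n)
  define G where "G = transpose U *v (U *v e)"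
  define v where "v = vec_restrict R' G"
  have "0 \<le> sqrt 2 * rop_const U s * norm e"
    by (simp add: rop_const_nonneg)
  then have "0 \<le> l * sqrt s" using small by linarith
  then have "0 \<le> l" using \<open>0 < s\<close> by (simp add: zero_le_mult_iff)
  have "supp v \<subseteq> R'" using supp_vec_restrict[of R' G] by (simp add: v_def)
  then have "card (supp v) \<le> s" "supp v \<inter> (P \<union> Q) = {}"
    using card_le_if_subset[of "supp v" R' s] \<open>card R' = s\<close> \<open>R' \<subseteq> R\<close> assms(5) by auto
  have "(norm v)\<^sup>2 = (U *v v) \<bullet> (U *v e)"
    by (simp add: inner_matrix_vector_transpose v_def G_def flip: inner_vec_restrict_self)
  also have "\<dots> \<le> sqrt 2 * rop_const U s * norm v * norm e"
    using inner_le_rop_const_split[OF \<open>card (supp v) \<le> s\<close> assms(2,3,4) \<open>supp v \<inter> (P \<union> Q) = {}\<close>, of U]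
    by linarith
  also have "\<dots> \<le> (l * sqrt s) * norm v"
    using mult_right_mono[OF small norm_ge_zero[of v]] by (simp add: mult_ac)
  finally have "norm v \<le> l * sqrt s"
    by (rule sq_le_mult_imp_le[OF _ norm_ge_zero \<open>0 \<le> l * sqrt s\<close>])
  then have "(norm v)\<^sup>2 \<le> s * l\<^sup>2"
    using power_mono[of "norm v" "l * sqrt s" 2] by (simp add: power_mult_distrib mult.commute)
  moreover have "s * l\<^sup>2 < (norm v)\<^sup>2"
  proof -
    have "(\<Sum>i\<in>R'. l\<^sup>2) < (\<Sum>i\<in>R'. (G $ i)\<^sup>2)"
    proof (rule sum_strict_mono)
      show "R' \<noteq> {}" using \<open>card R' = s\<close> \<open>0 < s\<close> by auto
      show "l\<^sup>2 < (G $ i)\<^sup>2" if "i \<in> R'" for i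
        using large[of i] \<open>R' \<subseteq> R\<close> that \<open>0 \<le> l\<close> power_strict_mono[of l "\<bar>G $ i\<bar>" 2]
        by (auto simp: G_def)
    qed simp
    then show ?thesis by (simp add: v_def norm_vec_restrict_sq \<open>card R' = s\<close>)
  qed
  ultimately show False by simp
qed

lemma norm_vec_restrict_residual_le:
  fixes U :: "real^'d^'n"
  assumes "card T \<le> k" "supp e \<subseteq> T"
  shows "norm (vec_restrict T (e - transpose U *v (U *v e))) \<le> rip_const U k * norm e"
proof -
  define a where "a = vec_restrict T (e - transpose U *v (U *v e))"
  have "supp a \<union> supp e \<subseteq> T" using assms(2) supp_vec_restrict by (auto simp: a_def)
  have "(norm a)\<^sup>2 = a \<bullet> e - (U *v a) \<bullet> (U *v e)"
    by (simp add: a_def inner_diff_right inner_matrix_vector_transpose flip: inner_vec_restrict_self)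
  also have "\<dots> \<le> rip_const U k * norm e * norm a"
    using inner_deviation_le_rip_const[OF card_le_if_subset[OF \<open>supp a \<union> supp e \<subseteq> T\<close> assms(1)], of U]
    by (simp add: mult_ac)
  finally have "(norm a)\<^sup>2 \<le> rip_const U k * norm e * norm a" .
  then show ?thesis
    unfolding a_def[symmetric]
    by (rule sq_le_mult_imp_le[OF _ norm_ge_zero]) (simp add: rip_const_nonneg)
qed

lemma soft_thr_nth: "soft_thr l x $ i = sgn (x $ i) * max (\<bar>x $ i\<bar> - l) 0"
  by (simp add: soft_thr_def)

lemma abs_soft_thr_diff_le: "0 \<le> l \<Longrightarrow> \<bar>soft_thr l x $ i - x $ i\<bar> \<le> l"
  by (cases "x $ i" "0 :: real" rule: linorder_cases) (auto simp: soft_thr_nth max_def)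

lemma abs_soft_thr_le: "0 \<le> l \<Longrightarrow> \<bar>soft_thr l x $ i\<bar> \<le> \<bar>x $ i\<bar>"
  by (cases "x $ i" "0 :: real" rule: linorder_cases) (auto simp: soft_thr_nth max_def)

lemma soft_thr_eq_0: "\<bar>x $ i\<bar> \<le> l \<Longrightarrow> soft_thr l x $ i = 0"
  by (simp add: soft_thr_nth max_def)

lemma norm_soft_thr_error_le:
  fixes xs w :: "real^'d"
  assumes "0 \<le> l" "supp xs \<subseteq> T" and noise: "\<And>i. i \<notin> T \<Longrightarrow> \<bar>w $ i\<bar> \<le> l"
  shows "norm (soft_thr l (xs + w) - xs) \<le> norm (vec_restrict T w) + l * sqrt (card (supp xs))"
proof -
  define a where "a = vec_restrict T w"
  define b where "b = vec_restrict (supp xs) (\<chi> i. l)"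
  have "\<bar>(soft_thr l (xs + w) - xs) $ i\<bar> \<le> \<bar>a $ i\<bar> + \<bar>b $ i\<bar>" for i
  proof (cases "i \<in> supp xs")
    case True
    then have "\<bar>(soft_thr l (xs + w) - xs) $ i\<bar> \<le> \<bar>soft_thr l (xs + w) $ i - (xs + w) $ i\<bar> + \<bar>w $ i\<bar>"
      by simp
    also have "\<dots> \<le> l + \<bar>w $ i\<bar>"
      using abs_soft_thr_diff_le[OF \<open>0 \<le> l\<close>, of "xs + w" i] by simp
    finally show ?thesis using True assms(1,2) by (auto simp: a_def b_def)
  next
    case False
    then have "xs $ i = 0" by (simp add: supp_def)
    show ?thesis
    proof (cases "i \<in> T")
      case True
      then show ?thesis
        using abs_soft_thr_le[OF \<open>0 \<le> l\<close>, of "xs + w" i] \<open>xs $ i = 0\<close> by (simp add: a_def)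
    next
      case False
      then show ?thesis using soft_thr_eq_0[of "xs + w" i l] noise[of i] \<open>xs $ i = 0\<close> by simp
    qed
  qed
  then have "norm (soft_thr l (xs + w) - xs) \<le> norm ((\<chi> i. \<bar>a $ i\<bar>) + (\<chi> i. \<bar>b $ i\<bar>))"
    by (intro norm_le_componentwise_cart) simp
  also have "\<dots> \<le> norm a + norm b"
    using norm_triangle_ineq[of "\<chi> i. \<bar>a $ i\<bar>" "\<chi> i. \<bar>b $ i\<bar>"] by (simp add: norm_vec_def)
  also have "norm b = l * sqrt (card (supp xs))"
  proof -
    have "(norm b)\<^sup>2 = (l * sqrt (card (supp xs)))\<^sup>2"
      by (simp add: b_def norm_vec_restrict_sq power_mult_distrib)
    then show ?thesis using \<open>0 \<le> l\<close> by (simp add: power2_eq_iff_nonneg)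
  qed
  finally show ?thesis by (simp add: a_def)
qed

lemma alg_Suc_noiseless:
  fixes U :: "real^'d^'n" and xs :: "real^'d" and lam :: "nat \<Rightarrow> real" and t :: nat
  defines "e \<equiv> alg U (U *v xs) lam t - xs"
  shows "alg U (U *v xs) lam (Suc t) = soft_thr (lam t) (xs + (e - transpose U *v (U *v e)))"
proof -
  have "U *v alg U (U *v xs) lam t - U *v xs = U *v e"
    by (simp add: e_def matrix_vector_mult_diff_distrib)
  moreover have "alg U (U *v xs) lam t = xs + e"
    by (simp add: e_def)
  ultimately show ?thesis
    by (simp only: alg.simps) (simp add: algebra_simps)
qed

theorem proposition2:
  fixes U :: "real^'d^'n" and xs :: "real^'d" and y :: "real^'n"
    and lam :: "nat \<Rightarrow> real" and s t :: nat and \<Delta> :: real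
  assumes "0 < s" and "2 * s \<le> CARD('d)"
    and "card (supp xs) \<le> s"
    and "y = U *v xs"
    and "\<forall>k. 0 < lam k"
    and "card (supp (alg U y lam t) - supp xs) \<le> s"
    and "norm (alg U y lam t - xs) \<le> \<Delta>"
    and "lam t = (rip_const U s + sqrt 2 * rop_const U s) / sqrt (real s) * \<Delta>"
  shows "norm (alg U y lam (Suc t) - xs)
           \<le> (rip_const U s + sqrt 2 * rop_const U s + rip_const U (3 * s)) * \<Delta>"
proof -
  \<comment> \<open>The hypothesis \<open>2 * s \<le> CARD('d)\<close> only makes \<open>\<theta>\<^sub>s\<^sub>,\<^sub>s\<close> meaningful.\<close>
  define x where "x = alg U y lam t"
  define e where "e = x - xs"
  define G where "G = transpose U *v (U *v e)"
  define l where "l = lam t"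
  define R where "R = {i. i \<notin> supp xs \<union> supp x \<and> l < \<bar>G $ i\<bar>}"
  define T where "T = supp xs \<union> supp x \<union> R"
  have step: "alg U y lam (Suc t) = soft_thr l (xs + (e - G))"
    unfolding assms(4) x_def e_def G_def l_def by (rule alg_Suc_noiseless)
  have "0 < l" using assms(5) by (simp add: l_def)
  have "norm e \<le> \<Delta>" using assms(7) by (simp add: e_def x_def)
  then have "0 \<le> \<Delta>" using norm_ge_zero order.trans by blast
  have supp_e: "supp e \<subseteq> supp xs \<union> (supp x - supp xs)"
    by (auto simp: e_def supp_def)
  have card_x: "card (supp x - supp xs) \<le> s" using assms(6) by (simp add: x_def)
  have l_sqrt_s: "l * sqrt s = (rip_const U s + sqrt 2 * rop_const U s) * \<Delta>"
    using assms(1) by (simp add: l_def assms(8))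
  have "sqrt 2 * rop_const U s * norm e \<le> sqrt 2 * rop_const U s * \<Delta>"
    using \<open>norm e \<le> \<Delta>\<close> by (simp add: rop_const_nonneg mult_left_mono)
  also have "\<dots> \<le> l * sqrt s"
    unfolding l_sqrt_s using \<open>0 \<le> \<Delta>\<close> rip_const_nonneg[of U s]
    by (simp add: distrib_right)
  finally have "card R \<le> s"
    using card_large_gram_entries_le[OF assms(1,3) card_x supp_e, where R = R and U = U and l = l]
    by (auto simp: R_def G_def)
  then have "card T \<le> 3 * s"
    using card_Un_le[of "supp xs \<union> (supp x - supp xs)" R]
      card_Un_le[of "supp xs" "supp x - supp xs"] assms(3) card_x
    by (simp add: T_def)
  then have "norm (vec_restrict T (e - G)) \<le> rip_const U (3 * s) * norm e"
    unfolding G_def using supp_e by (intro norm_vec_restrict_residual_le) (auto simp: T_def)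
  also have "\<dots> \<le> rip_const U (3 * s) * \<Delta>"
    using \<open>norm e \<le> \<Delta>\<close> by (simp add: rip_const_nonneg mult_left_mono)
  finally have residual: "norm (vec_restrict T (e - G)) \<le> rip_const U (3 * s) * \<Delta>" .
  have noise: "\<bar>(e - G) $ i\<bar> \<le> l" if "i \<notin> T" for i
    using that by (auto simp: T_def R_def e_def supp_def)
  have "norm (alg U y lam (Suc t) - xs) \<le> norm (vec_restrict T (e - G)) + l * sqrt (card (supp xs))"
    unfolding step using \<open>0 < l\<close> noise by (intro norm_soft_thr_error_le) (auto simp: T_def)
  also have "\<dots> \<le> rip_const U (3 * s) * \<Delta> + l * sqrt s"
    using residual assms(3) \<open>0 < l\<close> by (intro add_mono) simp_all
  finally show ?thesis
    unfolding l_sqrt_s by (simp add: algebra_simps)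
qed

end
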